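(* Consider the upper half-space model $\mathbb{H}^3=\{(x_1,x_2,x_3)\in\mathbb{R}^3: x_3>0\}$ with metric $g=\frac{1}{x_3^2}(dx_1^2+dx_2^2+dx_3^2)$. Let $E$ be a complete end of revolution in $\mathbb{H}^3$ about the $x_3$-axis, and suppose there is $c>0$ such that $E$ is contained on (i.e. in the closed region above) the $c$-cone, namely $E\subset\{x\in\mathbb{H}^3: x_3\ge c\sqrt{x_1^2+x_2^2}\}$. Then $E$ is parabolic.
   Context: The $c$-cone ($c>0$) is the surface obtained by rotating the curve $t\mapsto(t,0,ct)$, $t>0$, about the $x_3$-axis; it divides $\mathbb{H}^3$ into a part on (above) it and a part below it. A complete end of revolution about the $x_3$-axis is the set $E=\{(\gamma_1(s)\cos\theta,\gamma_1(s)\sin\theta,\gamma_2(s)): s\ge0,\ \theta\in[0,2\pi)\}$, where $\gamma(s)=(\gamma_1(s),0,\gamma_2(s))$, $s\in[0,\infty)$, is a smooth regular curve in the totally geodesic half-plane $\{x_2=0,x_1>0\}$ (so $\gamma_1>0$, $\gamma_2>0$) of infinite hyperbolic length; $E$ carries the metric induced by this immersion of $[0,\infty)\times\mathbb{S}^1$. An end $E$ is parabolic if every bounded harmonic function on $E$ is determined by its boundary values. *)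

theory Defs
  imports "HOL-Analysis.Analysis"
begin

definition H3 :: "(real \<times> real \<times> real) set" where
  "H3 = {(x1, x2, x3). x3 > 0}"

definition cone_region :: "real \<Rightarrow> (real \<times> real \<times> real) set" where
  "cone_region c = {(x1, x2, x3). x3 > 0 \<and> x3 \<ge> c * sqrt (x1\<^sup>2 + x2\<^sup>2)}"

text \<open>C-infinity on a set S (derivatives taken within S, so one-sided at endpoints).\<close>
definition smooth_on :: "real set \<Rightarrow> (real \<Rightarrow> real) \<Rightarrow> bool" where
  "smooth_on S f \<longleftrightarrow> (\<exists>D :: nat \<Rightarrow> real \<Rightarrow> real. D 0 = f \<and>
      (\<forall>n. \<forall>x\<in>S. (D n has_real_derivative D (Suc n) x) (at x within S)))"

text \<open>The profile curve in the half-plane {x2 = 0, x1 > 0}, written as (gamma1, gamma2).\<close>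
definition profile :: "(real \<Rightarrow> real) \<Rightarrow> (real \<Rightarrow> real) \<Rightarrow> real \<Rightarrow> real \<times> real" where
  "profile g1 g2 s = (g1 s, g2 s)"

definition profile_vel :: "(real \<Rightarrow> real) \<Rightarrow> (real \<Rightarrow> real) \<Rightarrow> real \<Rightarrow> real \<times> real" where
  "profile_vel g1 g2 s = vector_derivative (profile g1 g2) (at s within {0..})"

definition hyp_length_upto :: "(real \<Rightarrow> real) \<Rightarrow> (real \<Rightarrow> real) \<Rightarrow> real \<Rightarrow> real" where
  "hyp_length_upto g1 g2 T = integral {0..T} (\<lambda>s. norm (profile_vel g1 g2 s) / g2 s)"

text \<open>The immersion of [0,oo) x S^1 (theta taken in R, 2pi-periodic).\<close>
definition rev_immersion :: "(real \<Rightarrow> real) \<Rightarrow> (real \<Rightarrow> real) \<Rightarrow> real \<times> real \<Rightarrow> real \<times> real \<times> real" where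
  "rev_immersion g1 g2 p = (g1 (fst p) * cos (snd p), g1 (fst p) * sin (snd p), g2 (fst p))"

definition rev_end :: "(real \<Rightarrow> real) \<Rightarrow> (real \<Rightarrow> real) \<Rightarrow> (real \<times> real \<times> real) set" where
  "rev_end g1 g2 = rev_immersion g1 g2 ` ({0..} \<times> {0..<2*pi})"

definition pd1 :: "(real \<times> real \<Rightarrow> 'a::real_normed_vector) \<Rightarrow> real \<times> real \<Rightarrow> 'a" where
  "pd1 f p = vector_derivative (\<lambda>t. f (t, snd p)) (at (fst p))"

definition pd2 :: "(real \<times> real \<Rightarrow> 'a::real_normed_vector) \<Rightarrow> real \<times> real \<Rightarrow> 'a" where
  "pd2 f p = vector_derivative (\<lambda>t. f (fst p, t)) (at (snd p))"

text \<open>Coefficients of the pull-back of the hyperbolic metric (dx1^2+dx2^2+dx3^2)/x3^2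
  under an immersion X.\<close>
definition hyp_g11 :: "(real \<times> real \<Rightarrow> real \<times> real \<times> real) \<Rightarrow> real \<times> real \<Rightarrow> real" where
  "hyp_g11 X p = (pd1 X p \<bullet> pd1 X p) / (snd (snd (X p)))\<^sup>2"
definition hyp_g12 :: "(real \<times> real \<Rightarrow> real \<times> real \<times> real) \<Rightarrow> real \<times> real \<Rightarrow> real" where
  "hyp_g12 X p = (pd1 X p \<bullet> pd2 X p) / (snd (snd (X p)))\<^sup>2"
definition hyp_g22 :: "(real \<times> real \<Rightarrow> real \<times> real \<times> real) \<Rightarrow> real \<times> real \<Rightarrow> real" where
  "hyp_g22 X p = (pd2 X p \<bullet> pd2 X p) / (snd (snd (X p)))\<^sup>2"

text \<open>Laplace--Beltrami operator of the metric g11 ds^2 + 2 g12 ds dtheta + g22 dtheta^2: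
  (1/sqrt det g) d_i (sqrt det g g^{ij} d_j u).\<close>
definition laplace_beltrami ::
  "(real \<times> real \<Rightarrow> real) \<Rightarrow> (real \<times> real \<Rightarrow> real) \<Rightarrow> (real \<times> real \<Rightarrow> real)
   \<Rightarrow> (real \<times> real \<Rightarrow> real) \<Rightarrow> real \<times> real \<Rightarrow> real" where
  "laplace_beltrami g11 g12 g22 u p =
     (let dt = (\<lambda>q. g11 q * g22 q - (g12 q)\<^sup>2) in
       (pd1 (\<lambda>q. sqrt (dt q) * ((g22 q / dt q) * pd1 u q - (g12 q / dt q) * pd2 u q)) p
      + pd2 (\<lambda>q. sqrt (dt q) * (- (g12 q / dt q) * pd1 u q + (g11 q / dt q) * pd2 u q)) p)
       / sqrt (dt p))"

definition C2_on :: "(real \<times> real) set \<Rightarrow> (real \<times> real \<Rightarrow> real) \<Rightarrow> bool" where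
  "C2_on U u \<longleftrightarrow> (\<exists>(Du :: real \<times> real \<Rightarrow> ((real \<times> real) \<Rightarrow>\<^sub>L real))
       (D2u :: real \<times> real \<Rightarrow> ((real \<times> real) \<Rightarrow>\<^sub>L ((real \<times> real) \<Rightarrow>\<^sub>L real))).
      (\<forall>p\<in>U. (u has_derivative blinfun_apply (Du p)) (at p)) \<and>
      (\<forall>p\<in>U. (Du has_derivative blinfun_apply (D2u p)) (at p)) \<and>
      continuous_on U D2u)"

definition rev_end_harmonic :: "(real \<Rightarrow> real) \<Rightarrow> (real \<Rightarrow> real) \<Rightarrow> (real \<times> real \<Rightarrow> real) \<Rightarrow> bool" where
  "rev_end_harmonic g1 g2 u \<longleftrightarrow>
     (let X = rev_immersion g1 g2 in
       C2_on ({0<..} \<times> UNIV) u \<and>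
       (\<forall>p\<in>{0<..} \<times> UNIV. laplace_beltrami (hyp_g11 X) (hyp_g12 X) (hyp_g22 X) u p = 0))"

text \<open>A bounded harmonic function on E: a function on [0,oo) x S^1 (i.e. 2pi-periodic in theta),
  continuous up to the boundary, bounded, and harmonic in the interior.\<close>
definition bounded_harmonic_on_rev_end ::
  "(real \<Rightarrow> real) \<Rightarrow> (real \<Rightarrow> real) \<Rightarrow> (real \<times> real \<Rightarrow> real) \<Rightarrow> bool" where
  "bounded_harmonic_on_rev_end g1 g2 u \<longleftrightarrow>
     continuous_on ({0..} \<times> UNIV) u \<and>
     (\<forall>s\<ge>0. \<forall>\<theta>. u (s, \<theta> + 2*pi) = u (s, \<theta>)) \<and>
     bounded (u ` ({0..} \<times> UNIV)) \<and>
     rev_end_harmonic g1 g2 u"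

text \<open>Parabolicity: every bounded harmonic function is determined by its boundary values.\<close>
definition parabolic_rev_end :: "(real \<Rightarrow> real) \<Rightarrow> (real \<Rightarrow> real) \<Rightarrow> bool" where
  "parabolic_rev_end g1 g2 \<longleftrightarrow>
     (\<forall>u v. bounded_harmonic_on_rev_end g1 g2 u \<and> bounded_harmonic_on_rev_end g1 g2 v \<and>
        (\<forall>\<theta>. u (0, \<theta>) = v (0, \<theta>)) \<longrightarrow> (\<forall>p\<in>{0..} \<times> UNIV. u p = v p))"

end

theory Submission
  imports Defs
begin

text \<open>
  In the coordinates \<open>(s, \<theta>)\<close> the induced metric is
  \<open>(|\<gamma>'|\<^sup>2 ds\<^sup>2 + \<gamma>\<^sub>1\<^sup>2 d\<theta>\<^sup>2) / \<gamma>\<^sub>2\<^sup>2\<close>, so up to a positive factor the Laplace--Beltrami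
  operator is \<open>\<partial>\<^sub>s (\<gamma>\<^sub>1 / |\<gamma>'| \<partial>\<^sub>s u) + |\<gamma>'| / \<gamma>\<^sub>1 \<partial>\<^sub>\<theta>\<^sup>2 u\<close>. Take the radial function
  \<open>F(s) = \<integral>\<^sub>0\<^sup>s |\<gamma>'| w / \<gamma>\<^sub>1\<close> with \<open>w(s) = 1 + 1/(1 + s)\<close>. Since \<open>\<gamma>\<^sub>1 / |\<gamma>'| F' = w\<close>
  is strictly decreasing, \<open>F\<close> is strictly superharmonic; since \<open>w \<ge> 1\<close> and \<open>\<gamma>\<^sub>2 \<ge> c \<gamma>\<^sub>1\<close>
  on the cone, \<open>F(s)\<close> is at least \<open>c\<close> times the hyperbolic length of \<open>\<gamma>|[0,s]\<close>, which tends
  to infinity by completeness. If \<open>u, v\<close> are bounded harmonic with equal boundary values and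
  \<open>u > v\<close> somewhere, then for small \<open>\<epsilon> > 0\<close> the function \<open>u - v - \<epsilon> F\<close> is positive
  somewhere, negative near infinity and zero on the boundary, so it attains an interior
  maximum, where the second-derivative test contradicts \<open>\<Delta>(u - v - \<epsilon> F) = - \<epsilon> \<Delta>F > 0\<close>.
\<close>

section \<open>Calculus in the \<open>(s, \<theta>)\<close>-plane\<close>

lemma DERIV_local_max_second_order:
  fixes g g' :: "real \<Rightarrow> real"
  assumes r: "r > 0"
    and dg: "\<And>x. \<bar>x - z\<bar> < r \<Longrightarrow> (g has_real_derivative g' x) (at x)"
    and dg': "(g' has_real_derivative d) (at z)"
    and max: "\<And>x. \<bar>x - z\<bar> < r \<Longrightarrow> g x \<le> g z"
  shows "g' z = 0 \<and> d \<le> 0"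
proof
  show g'z: "g' z = 0"
    by (rule DERIV_local_max[OF dg[of z] r]) (use r max in \<open>auto simp: abs_minus_commute\<close>)
  show "d \<le> 0"
  proof (rule ccontr)
    assume "\<not> d \<le> 0"
    then have "d > 0" by simp
    from DERIV_pos_inc_right[OF dg' this] obtain e where e: "e > 0"
      and inc: "\<And>h. h > 0 \<Longrightarrow> h < e \<Longrightarrow> g' z < g' (z + h)" by blast
    define h where "h = min e r / 2"
    have h: "h > 0" "h < e" "h < r" using e r by (auto simp: h_def)
    have "g z < g (z + h)"
    proof (rule DERIV_pos_imp_increasing_open[of z "z + h" g])
      fix x assume x: "z < x" "x < z + h"
      have "g' x > 0" using inc[of "x - z"] x h g'z by simp
      moreover have "(g has_real_derivative g' x) (at x)" using dg x h by simp
      ultimately show "\<exists>y. (g has_real_derivative y) (at x) \<and> y > 0" by blast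
    next
      show "continuous_on {z..z + h} g"
        by (rule DERIV_continuous_on[where D = g'], rule has_field_derivative_at_within, rule dg)
           (use h in auto)
    next
      show "z < z + h" using h by simp
    qed
    moreover have "g (z + h) \<le> g z" using max[of "z + h"] h by simp
    ultimately show False by simp
  qed
qed

lemma has_vector_derivative_fst_line:
  fixes F :: "real \<times> real \<Rightarrow> 'a::real_normed_vector"
  assumes "(F has_derivative F') (at p)"
  shows "((\<lambda>t. F (t, snd p)) has_vector_derivative F' (1, 0)) (at (fst p))"
proof -
  have "((\<lambda>t. (t, snd p)) has_derivative (\<lambda>h. (h, 0))) (at (fst p))"
    by (auto intro!: derivative_eq_intros)
  from has_derivative_compose[OF this] assms
  have "((\<lambda>t. F (t, snd p)) has_derivative (\<lambda>h. F' (h, 0))) (at (fst p))" by simp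
  moreover have "(\<lambda>h. F' (h, 0)) = (\<lambda>h. h *\<^sub>R F' (1, 0))"
  proof
    fix h :: real
    have "(h, 0::real) = h *\<^sub>R (1, 0)" by simp
    then show "F' (h, 0) = h *\<^sub>R F' (1, 0)"
      using linear.scaleR[OF has_derivative_linear[OF assms]] by metis
  qed
  ultimately show ?thesis by (simp add: has_vector_derivative_def)
qed

lemma has_vector_derivative_snd_line:
  fixes F :: "real \<times> real \<Rightarrow> 'a::real_normed_vector"
  assumes "(F has_derivative F') (at p)"
  shows "((\<lambda>t. F (fst p, t)) has_vector_derivative F' (0, 1)) (at (snd p))"
proof -
  have "((\<lambda>t. (fst p, t)) has_derivative (\<lambda>h. (0, h))) (at (snd p))"
    by (auto intro!: derivative_eq_intros)
  from has_derivative_compose[OF this] assms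
  have "((\<lambda>t. F (fst p, t)) has_derivative (\<lambda>h. F' (0, h))) (at (snd p))" by simp
  moreover have "(\<lambda>h. F' (0, h)) = (\<lambda>h. h *\<^sub>R F' (0, 1))"
  proof
    fix h :: real
    have "(0::real, h) = h *\<^sub>R (0, 1)" by simp
    then show "F' (0, h) = h *\<^sub>R F' (0, 1)"
      using linear.scaleR[OF has_derivative_linear[OF assms]] by metis
  qed
  ultimately show ?thesis by (simp add: has_vector_derivative_def)
qed

lemma has_derivative_blinfun_apply_at:
  fixes Du :: "'a::real_normed_vector \<Rightarrow> 'b::real_normed_vector \<Rightarrow>\<^sub>L 'c::real_normed_vector"
  assumes "(Du has_derivative blinfun_apply D) (at p)"
  shows "((\<lambda>q. Du q v) has_derivative (\<lambda>h. D h v)) (at p)"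
  using bounded_linear.has_derivative[OF bounded_bilinear.bounded_linear_left[OF
      bounded_bilinear_blinfun_apply] assms, of v] .

lemma pd1_eq_blinfun_apply:
  assumes "(u has_derivative blinfun_apply (Du q)) (at q)"
  shows "pd1 u q = Du q (1, 0)"
  unfolding pd1_def by (rule vector_derivative_at[OF has_vector_derivative_fst_line[OF assms]])

lemma pd2_eq_blinfun_apply:
  assumes "(u has_derivative blinfun_apply (Du q)) (at q)"
  shows "pd2 u q = Du q (0, 1)"
  unfolding pd2_def by (rule vector_derivative_at[OF has_vector_derivative_snd_line[OF assms]])

lemma pd1_radial_flux:
  fixes Du :: "real \<times> real \<Rightarrow> ((real \<times> real) \<Rightarrow>\<^sub>L real)"
  assumes \<Phi>: "\<And>q. fst q > 0 \<Longrightarrow> \<Phi> q = a (fst q) * Du q (1, 0)"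
    and a: "(a has_real_derivative A) (at s)" and s: "s > 0"
    and D2: "(Du has_derivative blinfun_apply D2) (at (s, \<theta>))"
  shows "pd1 \<Phi> (s, \<theta>) = A * Du (s, \<theta>) (1, 0) + a s * D2 (1, 0) (1, 0)"
proof -
  have "((\<lambda>t. Du (t, \<theta>) (1, 0)) has_real_derivative D2 (1, 0) (1, 0)) (at s)"
    using has_vector_derivative_fst_line[OF has_derivative_blinfun_apply_at[OF D2]]
    by (simp add: has_real_derivative_iff_has_vector_derivative)
  from DERIV_mult[OF a this]
  have "((\<lambda>t. a t * Du (t, \<theta>) (1, 0)) has_real_derivative
      A * Du (s, \<theta>) (1, 0) + a s * D2 (1, 0) (1, 0)) (at s)"
    by (simp add: algebra_simps)
  then have "((\<lambda>t. \<Phi> (t, \<theta>)) has_real_derivative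
      A * Du (s, \<theta>) (1, 0) + a s * D2 (1, 0) (1, 0)) (at s)"
    by (rule has_field_derivative_transform_within_open[where S = "{0<..}"]) (use s \<Phi> in auto)
  then show ?thesis
    unfolding pd1_def by (simp add: vector_derivative_at has_real_derivative_iff_has_vector_derivative)
qed

lemma pd2_angular_flux:
  fixes Du :: "real \<times> real \<Rightarrow> ((real \<times> real) \<Rightarrow>\<^sub>L real)"
  assumes \<Phi>: "\<And>q. fst q > 0 \<Longrightarrow> \<Phi> q = b (fst q) * Du q (0, 1)" and s: "s > 0"
    and D2: "(Du has_derivative blinfun_apply D2) (at (s, \<theta>))"
  shows "pd2 \<Phi> (s, \<theta>) = b s * D2 (0, 1) (0, 1)"
proof -
  have "((\<lambda>t. Du (s, t) (0, 1)) has_real_derivative D2 (0, 1) (0, 1)) (at \<theta>)"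
    using has_vector_derivative_snd_line[OF has_derivative_blinfun_apply_at[OF D2]]
    by (simp add: has_real_derivative_iff_has_vector_derivative)
  from DERIV_cmult[OF this, of "b s"]
  have "((\<lambda>t. \<Phi> (s, t)) has_real_derivative b s * D2 (0, 1) (0, 1)) (at \<theta>)"
    using \<Phi> s by simp
  then show ?thesis
    unfolding pd2_def by (simp add: vector_derivative_at has_real_derivative_iff_has_vector_derivative)
qed

lemma local_max_fst_line:
  fixes Dw :: "real \<times> real \<Rightarrow> ((real \<times> real) \<Rightarrow>\<^sub>L real)"
  assumes s: "s > 0"
    and Dw: "\<And>q. fst q > 0 \<Longrightarrow> (w has_derivative blinfun_apply (Dw q)) (at q)"
    and D2: "(Dw has_derivative blinfun_apply D2) (at (s, \<theta>))"
    and \<phi>: "\<And>t. t > 0 \<Longrightarrow> (\<phi> has_real_derivative \<phi>' t) (at t)"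
    and \<phi>': "(\<phi>' has_real_derivative \<Phi>2) (at s)"
    and max: "\<And>t. t > 0 \<Longrightarrow> w (t, \<theta>) - \<phi> t \<le> w (s, \<theta>) - \<phi> s"
  shows "Dw (s, \<theta>) (1, 0) = \<phi>' s \<and> D2 (1, 0) (1, 0) \<le> \<Phi>2"
proof -
  have "Dw (s, \<theta>) (1, 0) - \<phi>' s = 0 \<and> D2 (1, 0) (1, 0) - \<Phi>2 \<le> 0"
  proof (rule DERIV_local_max_second_order[where g = "\<lambda>t. w (t, \<theta>) - \<phi> t" and z = s
        and g' = "\<lambda>t. Dw (t, \<theta>) (1, 0) - \<phi>' t", OF s])
    fix t assume "\<bar>t - s\<bar> < s"
    then have t: "t > 0" by simp
    have "((\<lambda>t. w (t, \<theta>)) has_real_derivative Dw (t, \<theta>) (1, 0)) (at t)"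
      using has_vector_derivative_fst_line[OF Dw[of "(t, \<theta>)"]] t
      by (simp add: has_real_derivative_iff_has_vector_derivative)
    then show "((\<lambda>t. w (t, \<theta>) - \<phi> t) has_real_derivative Dw (t, \<theta>) (1, 0) - \<phi>' t) (at t)"
      using \<phi>[OF t] by (rule DERIV_diff)
    show "w (t, \<theta>) - \<phi> t \<le> w (s, \<theta>) - \<phi> s" using max[OF t] .
  next
    have "((\<lambda>t. Dw (t, \<theta>) (1, 0)) has_real_derivative D2 (1, 0) (1, 0)) (at s)"
      using has_vector_derivative_fst_line[OF has_derivative_blinfun_apply_at[OF D2]]
      by (simp add: has_real_derivative_iff_has_vector_derivative)
    then show "((\<lambda>t. Dw (t, \<theta>) (1, 0) - \<phi>' t) has_real_derivative D2 (1, 0) (1, 0) - \<Phi>2) (at s)"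
      using \<phi>' by (rule DERIV_diff)
  qed
  then show ?thesis by simp
qed

lemma local_max_snd_line:
  fixes Dw :: "real \<times> real \<Rightarrow> ((real \<times> real) \<Rightarrow>\<^sub>L real)"
  assumes s: "s > 0"
    and Dw: "\<And>q. fst q > 0 \<Longrightarrow> (w has_derivative blinfun_apply (Dw q)) (at q)"
    and D2: "(Dw has_derivative blinfun_apply D2) (at (s, \<theta>))"
    and max: "\<And>t. w (s, t) \<le> w (s, \<theta>)"
  shows "Dw (s, \<theta>) (0, 1) = 0 \<and> D2 (0, 1) (0, 1) \<le> 0"
proof (rule DERIV_local_max_second_order[where g = "\<lambda>t. w (s, t)" and z = \<theta>
      and g' = "\<lambda>t. Dw (s, t) (0, 1)" and r = 1])
  fix t
  show "((\<lambda>t. w (s, t)) has_real_derivative Dw (s, t) (0, 1)) (at t)"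
    using has_vector_derivative_snd_line[OF Dw[of "(s, t)"]] s
    by (simp add: has_real_derivative_iff_has_vector_derivative)
  show "w (s, t) \<le> w (s, \<theta>)" by (rule max)
next
  show "((\<lambda>t. Dw (s, t) (0, 1)) has_real_derivative D2 (0, 1) (0, 1)) (at \<theta>)"
    using has_vector_derivative_snd_line[OF has_derivative_blinfun_apply_at[OF D2]]
    by (simp add: has_real_derivative_iff_has_vector_derivative)
qed simp
section \<open>Maxima of periodic functions on a half-plane\<close>

lemma periodic_shift_int:
  assumes per: "\<And>x. f (x + P) = f x"
  shows "f (x + of_int n * P) = f x"
proof (induction n rule: int_induct[where k = 0])
  case (step1 i)
  have "f (x + of_int (i + 1) * P) = f ((x + of_int i * P) + P)" by (simp add: algebra_simps)
  with per step1 show ?case by simp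
next
  case (step2 i)
  have "f (x + of_int i * P) = f ((x + of_int (i - 1) * P) + P)" by (simp add: algebra_simps)
  with per step2 show ?case by simp
qed simp

lemma periodic_reduce_to_period:
  fixes P :: real
  assumes P: "P > 0" and per: "\<And>x. f (x + P) = f x"
  shows "\<exists>y\<in>{0..P}. f x = f y"
proof
  define y where "y = x - of_int \<lfloor>x / P\<rfloor> * P"
  from floor_divide_lower[OF P, of x] floor_divide_upper[OF P, of x]
  show "y \<in> {0..P}" unfolding y_def by (simp add: algebra_simps)
  show "f x = f y"
    using periodic_shift_int[of f P y "\<lfloor>x / P\<rfloor>", OF per] unfolding y_def by simp
qed

lemma periodic_attains_max_on_half_plane:
  fixes \<psi> :: "real \<times> real \<Rightarrow> real" and P :: real
  assumes P: "P > 0"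
    and per: "\<And>s \<theta>. s \<ge> 0 \<Longrightarrow> \<psi> (s, \<theta> + P) = \<psi> (s, \<theta>)"
    and cont: "continuous_on ({0..T} \<times> {0..P}) \<psi>"
    and p: "fst p \<ge> 0"
    and tail: "\<And>q. fst q \<ge> T \<Longrightarrow> \<psi> q < \<psi> p"
  obtains p0 where "0 \<le> fst p0" "\<And>q. fst q \<ge> 0 \<Longrightarrow> \<psi> q \<le> \<psi> p0"
proof -
  have reduce: "\<exists>y\<in>{0..P}. \<psi> (s, \<theta>) = \<psi> (s, y)" if "s \<ge> 0" for s \<theta>
    using periodic_reduce_to_period[of P "\<lambda>\<theta>. \<psi> (s, \<theta>)"] P per[OF that] by blast
  have pT: "fst p < T" using tail[of p] by force
  obtain y where y: "y \<in> {0..P}" "\<psi> p = \<psi> (fst p, y)"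
    using reduce[OF p, of "snd p"] by auto
  have "compact ({0..T} \<times> {0..P})" by (intro compact_Times compact_Icc)
  moreover have "(fst p, y) \<in> {0..T} \<times> {0..P}" using p pT y by auto
  ultimately obtain p0 where p0: "p0 \<in> {0..T} \<times> {0..P}"
    and max: "\<And>q. q \<in> {0..T} \<times> {0..P} \<Longrightarrow> \<psi> q \<le> \<psi> p0"
    using continuous_attains_sup[OF _ _ cont] by blast
  have glob: "\<psi> q \<le> \<psi> p0" if q: "fst q \<ge> 0" for q
  proof (cases "fst q \<ge> T")
    case True
    then have "\<psi> q < \<psi> (fst p, y)" using tail y by simp
    also have "\<dots> \<le> \<psi> p0" using p pT y by (intro max) auto
    finally show ?thesis by simp
  next
    case False
    obtain z where "z \<in> {0..P}" "\<psi> q = \<psi> (fst q, z)" using reduce[OF q, of "snd q"] by auto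
    then show ?thesis using q False max[of "(fst q, z)"] by auto
  qed
  with p0 show ?thesis by (intro that[of p0]) auto
qed

section \<open>The metric of an end of revolution\<close>

lemma smooth_on_second_deriv:
  assumes "smooth_on {0..} g"
  obtains d d2 where "\<And>x. x \<ge> 0 \<Longrightarrow> (g has_real_derivative d x) (at x within {0..})"
    and "\<And>x. x \<ge> 0 \<Longrightarrow> (d has_real_derivative d2 x) (at x within {0..})"
proof -
  from assms obtain D :: "nat \<Rightarrow> real \<Rightarrow> real" where D0: "D 0 = g"
    and D: "\<And>n x. x \<ge> 0 \<Longrightarrow> (D n has_real_derivative D (Suc n) x) (at x within {0..})"
    unfolding smooth_on_def by auto
  then show ?thesis using that[of "D 1" "D 2"] D[of _ 0] D[of _ 1] D0 by (simp add: numeral_2_eq_2)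
qed

lemma vector_derivative_within_atLeast:
  assumes "(f has_vector_derivative f') (at s within {0..})" and "s \<ge> (0::real)"
  shows "vector_derivative f (at s within {0..}) = f'"
proof (rule vector_derivative_within[OF _ assms(1)])
  have "s islimpt {0..s + 1}" using assms(2) by simp
  then show "at s within {0..} \<noteq> bot"
    by (simp add: trivial_limit_within islimpt_subset[of s "{0..s + 1}"])
qed

lemma profile_vel_eq:
  assumes "(g1 has_real_derivative d1) (at s within {0..})"
    and "(g2 has_real_derivative e1) (at s within {0..})" and "s \<ge> 0"
  shows "profile_vel g1 g2 s = (d1, e1)"
  unfolding profile_vel_def profile_def using assms
  by (intro vector_derivative_within_atLeast has_vector_derivative_Pair)
     (simp_all add: has_real_derivative_iff_has_vector_derivative)

lemma rev_end_in_cone_region_imp: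
  assumes "rev_end g1 g2 \<subseteq> cone_region c" and "s \<ge> 0" and "g1 s > 0"
  shows "c * g1 s \<le> g2 s"
proof -
  have "rev_immersion g1 g2 (s, 0) \<in> cone_region c"
    using assms(1,2) unfolding rev_end_def by auto
  then show ?thesis using assms(3) by (simp add: cone_region_def rev_immersion_def)
qed

lemma rev_end_harmonic_derivatives:
  assumes "rev_end_harmonic g1 g2 u"
  obtains Du :: "real \<times> real \<Rightarrow> ((real \<times> real) \<Rightarrow>\<^sub>L real)" and D2u
  where "\<And>q. fst q > 0 \<Longrightarrow> (u has_derivative blinfun_apply (Du q)) (at q)"
    and "\<And>q. fst q > 0 \<Longrightarrow> (Du has_derivative blinfun_apply (D2u q)) (at q)"
    and "\<And>q. fst q > 0 \<Longrightarrow> laplace_beltrami (hyp_g11 (rev_immersion g1 g2))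
          (hyp_g12 (rev_immersion g1 g2)) (hyp_g22 (rev_immersion g1 g2)) u q = 0"
proof -
  have half_plane: "q \<in> {0<..} \<times> UNIV \<longleftrightarrow> fst q > 0" for q :: "real \<times> real"
    by (cases q) auto
  from assms show ?thesis
    unfolding rev_end_harmonic_def C2_on_def Let_def half_plane Ball_def
    by (metis that)
qed

lemma bounded_harmonic_on_rev_end_bound:
  assumes "bounded_harmonic_on_rev_end g1 g2 u"
  obtains B where "\<And>q. fst q \<ge> 0 \<Longrightarrow> \<bar>u q\<bar> \<le> B"
  using assms unfolding bounded_harmonic_on_rev_end_def bounded_iff
  by (metis mem_Times_iff UNIV_I atLeast_iff image_eqI real_norm_def)

lemma scaled_cos_sin_squared: "(r * cos \<theta>)\<^sup>2 + (r * sin \<theta>)\<^sup>2 = (r::real)\<^sup>2"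
  by (simp add: power_mult_distrib flip: distrib_left)

locale rotational_profile =
  fixes g1 g2 d1 d2 e1 e2 :: "real \<Rightarrow> real"
  assumes g1_deriv: "\<And>x. x \<ge> 0 \<Longrightarrow> (g1 has_real_derivative d1 x) (at x within {0..})"
    and d1_deriv: "\<And>x. x \<ge> 0 \<Longrightarrow> (d1 has_real_derivative d2 x) (at x within {0..})"
    and g2_deriv: "\<And>x. x \<ge> 0 \<Longrightarrow> (g2 has_real_derivative e1 x) (at x within {0..})"
    and e1_deriv: "\<And>x. x \<ge> 0 \<Longrightarrow> (e1 has_real_derivative e2 x) (at x within {0..})"
    and regular: "\<And>s. s \<ge> 0 \<Longrightarrow> (d1 s, e1 s) \<noteq> (0, 0)"
    and pos: "\<And>s. s \<ge> 0 \<Longrightarrow> g1 s > 0 \<and> g2 s > 0"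
begin

lemma g1_DERIV: "x > 0 \<Longrightarrow> (g1 has_real_derivative d1 x) (at x)"
  using g1_deriv[of x] at_within_interior[of x "{0..}"] by simp
lemma d1_DERIV: "x > 0 \<Longrightarrow> (d1 has_real_derivative d2 x) (at x)"
  using d1_deriv[of x] at_within_interior[of x "{0..}"] by simp
lemma g2_DERIV: "x > 0 \<Longrightarrow> (g2 has_real_derivative e1 x) (at x)"
  using g2_deriv[of x] at_within_interior[of x "{0..}"] by simp
lemma e1_DERIV: "x > 0 \<Longrightarrow> (e1 has_real_derivative e2 x) (at x)"
  using e1_deriv[of x] at_within_interior[of x "{0..}"] by simp

definition speed :: "real \<Rightarrow> real" where
  "speed s = sqrt ((d1 s)\<^sup>2 + (e1 s)\<^sup>2)"

lemma speed_pos: "s \<ge> 0 \<Longrightarrow> speed s > 0"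
  using regular[of s] by (auto simp: speed_def sum_power2_gt_zero_iff)

lemma pd1_rev_immersion:
  assumes t: "t > 0"
  shows "pd1 (rev_immersion g1 g2) (t, \<theta>) = (d1 t * cos \<theta>, d1 t * sin \<theta>, e1 t)"
proof -
  have "((\<lambda>x. (g1 x * cos \<theta>, g1 x * sin \<theta>, g2 x)) has_vector_derivative
      (d1 t * cos \<theta>, d1 t * sin \<theta>, e1 t)) (at t)"
    using g1_DERIV[OF t] g2_DERIV[OF t]
    by (intro has_vector_derivative_Pair)
       (auto intro!: DERIV_cmult_right simp: has_real_derivative_iff_has_vector_derivative[symmetric])
  then show ?thesis unfolding pd1_def rev_immersion_def by (simp add: vector_derivative_at)
qed

lemma pd2_rev_immersion:
  "pd2 (rev_immersion g1 g2) (t, \<theta>) = (- g1 t * sin \<theta>, g1 t * cos \<theta>, 0)"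
proof -
  have "((\<lambda>x. (g1 t * cos x, g1 t * sin x, g2 t)) has_vector_derivative
      (- g1 t * sin \<theta>, g1 t * cos \<theta>, 0)) (at \<theta>)"
    by (intro has_vector_derivative_Pair)
       (auto intro!: derivative_eq_intros simp: has_real_derivative_iff_has_vector_derivative[symmetric])
  then show ?thesis unfolding pd2_def rev_immersion_def by (simp add: vector_derivative_at)
qed

lemma hyp_g11_rev_immersion:
  assumes "t > 0"
  shows "hyp_g11 (rev_immersion g1 g2) (t, \<theta>) = (speed t)\<^sup>2 / (g2 t)\<^sup>2"
proof -
  have "pd1 (rev_immersion g1 g2) (t, \<theta>) \<bullet> pd1 (rev_immersion g1 g2) (t, \<theta>)
      = (d1 t * cos \<theta>)\<^sup>2 + (d1 t * sin \<theta>)\<^sup>2 + (e1 t)\<^sup>2"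
    using assms by (simp add: pd1_rev_immersion power2_eq_square)
  also have "\<dots> = (speed t)\<^sup>2" by (simp add: speed_def scaled_cos_sin_squared)
  finally show ?thesis by (simp add: hyp_g11_def rev_immersion_def)
qed

lemma hyp_g12_rev_immersion:
  "t > 0 \<Longrightarrow> hyp_g12 (rev_immersion g1 g2) (t, \<theta>) = 0"
  by (simp add: hyp_g12_def pd1_rev_immersion pd2_rev_immersion algebra_simps)

lemma hyp_g22_rev_immersion:
  "hyp_g22 (rev_immersion g1 g2) (t, \<theta>) = (g1 t)\<^sup>2 / (g2 t)\<^sup>2"
proof -
  have "pd2 (rev_immersion g1 g2) (t, \<theta>) \<bullet> pd2 (rev_immersion g1 g2) (t, \<theta>)
      = (g1 t * cos \<theta>)\<^sup>2 + (g1 t * sin \<theta>)\<^sup>2"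
    by (simp add: pd2_rev_immersion power2_eq_square)
  also have "\<dots> = (g1 t)\<^sup>2" by (rule scaled_cos_sin_squared)
  finally show ?thesis by (simp add: hyp_g22_def rev_immersion_def)
qed

lemma metric_det_rev_immersion:
  assumes "t > 0"
  shows "hyp_g11 (rev_immersion g1 g2) (t, \<theta>) * hyp_g22 (rev_immersion g1 g2) (t, \<theta>)
      - (hyp_g12 (rev_immersion g1 g2) (t, \<theta>))\<^sup>2 = (speed t * g1 t / (g2 t)\<^sup>2)\<^sup>2"
  using assms
  by (simp add: hyp_g11_rev_immersion hyp_g12_rev_immersion hyp_g22_rev_immersion
      power_mult_distrib power_divide power2_eq_square)

lemma laplace_beltrami_rev_immersion:
  fixes Du :: "real \<times> real \<Rightarrow> ((real \<times> real) \<Rightarrow>\<^sub>L real)"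
  assumes Du: "\<And>q. fst q > 0 \<Longrightarrow> (u has_derivative blinfun_apply (Du q)) (at q)"
    and D2: "(Du has_derivative blinfun_apply D2) (at (s, \<theta>))"
    and s: "s > 0"
    and A: "((\<lambda>t. g1 t / speed t) has_real_derivative A) (at s)"
  shows "laplace_beltrami (hyp_g11 (rev_immersion g1 g2)) (hyp_g12 (rev_immersion g1 g2))
      (hyp_g22 (rev_immersion g1 g2)) u (s, \<theta>)
    = (A * Du (s, \<theta>) (1, 0) + g1 s / speed s * D2 (1, 0) (1, 0)
        + speed s / g1 s * D2 (0, 1) (0, 1)) / (speed s * g1 s / (g2 s)\<^sup>2)"
proof -
  define G11 where "G11 = hyp_g11 (rev_immersion g1 g2)"
  define G12 where "G12 = hyp_g12 (rev_immersion g1 g2)"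
  define G22 where "G22 = hyp_g22 (rev_immersion g1 g2)"
  define dt where "dt q = G11 q * G22 q - (G12 q)\<^sup>2" for q
  have sqrt_dt: "sqrt (dt (t, \<phi>)) = speed t * g1 t / (g2 t)\<^sup>2" if "t > 0" for t \<phi>
    using that speed_pos[of t] pos[of t]
    by (simp add: dt_def G11_def G12_def G22_def metric_det_rev_immersion)
  have flux1: "sqrt (dt q) * (G22 q / dt q * pd1 u q - G12 q / dt q * pd2 u q)
      = g1 (fst q) / speed (fst q) * Du q (1, 0)" if q_pos: "fst q > 0" for q
  proof -
    obtain t \<phi> where q: "q = (t, \<phi>)" and t: "t > 0" using q_pos by (cases q) auto
    have dt_q: "dt (t, \<phi>) = (speed t * g1 t / (g2 t)\<^sup>2)\<^sup>2"
      unfolding dt_def G11_def G12_def G22_def by (rule metric_det_rev_immersion[OF t])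
    show ?thesis
      unfolding q sqrt_dt[OF t] pd1_eq_blinfun_apply[of u Du, OF Du[OF q_pos, unfolded q]] unfolding dt_q
      using speed_pos[of t] pos[of t] t
      by (simp add: G12_def G22_def hyp_g12_rev_immersion hyp_g22_rev_immersion field_simps power2_eq_square)
  qed
  have flux2: "sqrt (dt q) * (- (G12 q / dt q) * pd1 u q + G11 q / dt q * pd2 u q)
      = speed (fst q) / g1 (fst q) * Du q (0, 1)" if q_pos: "fst q > 0" for q
  proof -
    obtain t \<phi> where q: "q = (t, \<phi>)" and t: "t > 0" using q_pos by (cases q) auto
    have dt_q: "dt (t, \<phi>) = (speed t * g1 t / (g2 t)\<^sup>2)\<^sup>2"
      unfolding dt_def G11_def G12_def G22_def by (rule metric_det_rev_immersion[OF t])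
    show ?thesis
      unfolding q sqrt_dt[OF t] pd2_eq_blinfun_apply[of u Du, OF Du[OF q_pos, unfolded q]] unfolding dt_q
      using speed_pos[of t] pos[of t] t
      by (simp add: G11_def G12_def hyp_g11_rev_immersion hyp_g12_rev_immersion field_simps power2_eq_square)
  qed
  have "laplace_beltrami G11 G12 G22 u (s, \<theta>)
      = (pd1 (\<lambda>q. sqrt (dt q) * (G22 q / dt q * pd1 u q - G12 q / dt q * pd2 u q)) (s, \<theta>)
        + pd2 (\<lambda>q. sqrt (dt q) * (- (G12 q / dt q) * pd1 u q + G11 q / dt q * pd2 u q)) (s, \<theta>))
        / sqrt (dt (s, \<theta>))"
    by (simp only: laplace_beltrami_def Let_def dt_def)
  also have "\<dots> = (A * Du (s, \<theta>) (1, 0) + g1 s / speed s * D2 (1, 0) (1, 0)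
        + speed s / g1 s * D2 (0, 1) (0, 1)) / (speed s * g1 s / (g2 s)\<^sup>2)"
    using pd1_radial_flux[OF flux1 A s D2] pd2_angular_flux[OF flux2 s D2]
      sqrt_dt[OF s]
    by simp
  finally show ?thesis unfolding G11_def G12_def G22_def .
qed

end

section \<open>A strictly superharmonic exhaustion\<close>

definition barrier_weight :: "real \<Rightarrow> real" where
  "barrier_weight s = 1 + 1 / (1 + s)"

lemma barrier_weight_ge_1: "s \<ge> 0 \<Longrightarrow> barrier_weight s \<ge> 1"
  unfolding barrier_weight_def by simp

lemma barrier_weight_DERIV:
  "s \<ge> 0 \<Longrightarrow> (barrier_weight has_real_derivative - 1 / (1 + s)\<^sup>2) (at s)"
  unfolding barrier_weight_def by (auto intro!: derivative_eq_intros simp: power2_eq_square)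

lemma continuous_on_barrier_weight: "continuous_on {0..} barrier_weight"
  unfolding barrier_weight_def by (intro continuous_intros) auto

context rotational_profile
begin

lemma continuous_on_d1: "continuous_on {0..} d1"
  by (rule DERIV_continuous_on[where D = d2]) (use d1_deriv in auto)
lemma continuous_on_e1: "continuous_on {0..} e1"
  by (rule DERIV_continuous_on[where D = e2]) (use e1_deriv in auto)
lemma continuous_on_g1: "continuous_on {0..} g1"
  by (rule DERIV_continuous_on[where D = d1]) (use g1_deriv in auto)
lemma continuous_on_g2: "continuous_on {0..} g2"
  by (rule DERIV_continuous_on[where D = e1]) (use g2_deriv in auto)

lemma continuous_on_speed: "continuous_on {0..} speed"
  unfolding speed_def[abs_def] by (intro continuous_intros continuous_on_d1 continuous_on_e1)

lemma speed_DERIV: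
  assumes s: "s > 0"
  shows "\<exists>N. (speed has_real_derivative N) (at s)"
proof -
  have "(d1 s)\<^sup>2 + (e1 s)\<^sup>2 > 0" using speed_pos[of s] s by (simp add: speed_def)
  then show ?thesis
    unfolding speed_def[abs_def]
    using d1_DERIV[OF s] e1_DERIV[OF s] by (auto intro!: derivative_eq_intros)
qed

lemma flux_coeff_DERIV: "s > 0 \<Longrightarrow> \<exists>A. ((\<lambda>t. g1 t / speed t) has_real_derivative A) (at s)"
  using speed_DERIV g1_DERIV speed_pos[of s] by (fastforce intro: DERIV_divide)

definition barrier_density :: "real \<Rightarrow> real" where
  "barrier_density s = speed s * barrier_weight s / g1 s"

definition barrier :: "real \<Rightarrow> real" where
  "barrier s = integral {0..s} barrier_density"

lemma barrier_density_pos: "s \<ge> 0 \<Longrightarrow> barrier_density s > 0"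
  unfolding barrier_density_def
  using speed_pos[of s] pos[of s] barrier_weight_ge_1[of s] by simp

lemma continuous_on_barrier_density: "continuous_on {0..} barrier_density"
  unfolding barrier_density_def[abs_def]
  by (intro continuous_intros continuous_on_speed continuous_on_barrier_weight continuous_on_g1)
     (use pos in force)

lemma barrier_density_DERIV:
  "s > 0 \<Longrightarrow> \<exists>H. (barrier_density has_real_derivative H) (at s)"
  unfolding barrier_density_def[abs_def]
  using speed_DERIV barrier_weight_DERIV[of s] g1_DERIV pos[of s]
  by (fastforce intro: DERIV_divide DERIV_mult)

lemma barrier_DERIV:
  assumes s: "s > 0"
  shows "(barrier has_real_derivative barrier_density s) (at s)"
proof -
  have "continuous_on {0..s + 1} barrier_density"
    by (rule continuous_on_subset[OF continuous_on_barrier_density]) auto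
  then have "(barrier has_vector_derivative barrier_density s) (at s within {0..s + 1})"
    unfolding barrier_def by (rule integral_has_vector_derivative) (use s in auto)
  moreover have "at s within {0..s + 1} = at s"
    by (rule at_within_interior) (use s in auto)
  ultimately show ?thesis by (simp add: has_real_derivative_iff_has_vector_derivative)
qed

lemma continuous_on_barrier: "continuous_on {0..T} barrier"
  unfolding barrier_def
  by (intro indefinite_integral_continuous_1 integrable_continuous_interval
      continuous_on_subset[OF continuous_on_barrier_density]) auto

lemma barrier_0 [simp]: "barrier 0 = 0"
  unfolding barrier_def by simp

lemma barrier_nonneg: "s \<ge> 0 \<Longrightarrow> barrier s \<ge> 0"
  unfolding barrier_def
  by (rule integral_nonneg[OF integrable_continuous_interval])
     (auto intro: continuous_on_subset[OF continuous_on_barrier_density]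
        less_imp_le[OF barrier_density_pos])

lemma barrier_superharmonic:
  assumes s: "s > 0"
    and A: "((\<lambda>t. g1 t / speed t) has_real_derivative A) (at s)"
    and H: "(barrier_density has_real_derivative H) (at s)"
  shows "A * barrier_density s + g1 s / speed s * H < 0"
proof -
  have "((\<lambda>t. g1 t / speed t * barrier_density t) has_real_derivative
      A * barrier_density s + g1 s / speed s * H) (at s)"
    using DERIV_mult[OF A H] by (simp add: algebra_simps)
  then have "(barrier_weight has_real_derivative A * barrier_density s + g1 s / speed s * H) (at s)"
  proof (rule has_field_derivative_transform_within_open[where S = "{0<..}"])
    fix x :: real assume "x \<in> {0<..}"
    then show "g1 x / speed x * barrier_density x = barrier_weight x"
      using speed_pos[of x] pos[of x] by (simp add: barrier_density_def field_simps)
  qed (use s in auto)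
  with barrier_weight_DERIV[of s] s
  have "A * barrier_density s + g1 s / speed s * H = - 1 / (1 + s)\<^sup>2"
    by (auto intro: DERIV_unique)
  also have "\<dots> < 0" using s by simp
  finally show ?thesis .
qed

lemma length_le_barrier:
  assumes c: "c > 0" and cone: "\<And>s. s \<ge> 0 \<Longrightarrow> c * g1 s \<le> g2 s" and s: "s \<ge> 0"
  shows "c * hyp_length_upto g1 g2 s \<le> barrier s"
proof -
  have cont: "continuous_on {0..s} (\<lambda>r. speed r / g2 r)"
    by (intro continuous_intros continuous_on_subset[OF continuous_on_speed]
        continuous_on_subset[OF continuous_on_g2]) (use pos in force)+
  have "c * hyp_length_upto g1 g2 s = c * integral {0..s} (\<lambda>r. speed r / g2 r)"
    unfolding hyp_length_upto_def
    by (intro arg_cong[where f = "(*) c"] integral_cong)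
       (auto simp: profile_vel_eq[OF g1_deriv g2_deriv] norm_Pair speed_def)
  also have "\<dots> = integral {0..s} (\<lambda>r. c * (speed r / g2 r))"
    by (rule integral_mult[OF integrable_continuous_interval[OF cont]])
  also have "\<dots> \<le> integral {0..s} barrier_density"
  proof (rule integral_le)
    fix r assume "r \<in> {0..s}"
    then have r: "r \<ge> 0" by simp
    have "c * (speed r / g2 r) \<le> speed r / g1 r"
      using cone[OF r] speed_pos[OF r] pos[OF r]
      by (simp add: field_simps mult_left_mono)
    also have "\<dots> \<le> barrier_density r"
      using speed_pos[OF r] pos[OF r] barrier_weight_ge_1[OF r]
      by (simp add: barrier_density_def divide_right_mono)
    finally show "c * (speed r / g2 r) \<le> barrier_density r" .
  qed (intro integrable_continuous_interval continuous_intros cont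
      continuous_on_subset[OF continuous_on_barrier_density]; auto)+
  finally show ?thesis unfolding barrier_def .
qed

lemma barrier_at_top:
  assumes c: "c > 0" and cone: "\<And>s. s \<ge> 0 \<Longrightarrow> c * g1 s \<le> g2 s"
    and complete: "filterlim (hyp_length_upto g1 g2) at_top at_top"
  shows "filterlim barrier at_top at_top"
proof (rule filterlim_at_top_mono)
  show "filterlim (\<lambda>s. c * hyp_length_upto g1 g2 s) at_top at_top"
    by (rule filterlim_tendsto_pos_mult_at_top[OF tendsto_const c complete])
  show "\<forall>\<^sub>F s in at_top. c * hyp_length_upto g1 g2 s \<le> barrier s"
    using eventually_ge_at_top[of 0] by eventually_elim (rule length_le_barrier[OF c cone])
qed

section \<open>The comparison principle\<close>

lemma harmonic_radial_equation:
  fixes Du :: "real \<times> real \<Rightarrow> ((real \<times> real) \<Rightarrow>\<^sub>L real)"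
  assumes Du: "\<And>q. fst q > 0 \<Longrightarrow> (u has_derivative blinfun_apply (Du q)) (at q)"
    and D2: "(Du has_derivative blinfun_apply D2) (at (s, \<theta>))"
    and s: "s > 0"
    and A: "((\<lambda>t. g1 t / speed t) has_real_derivative A) (at s)"
    and harmonic: "laplace_beltrami (hyp_g11 (rev_immersion g1 g2)) (hyp_g12 (rev_immersion g1 g2))
      (hyp_g22 (rev_immersion g1 g2)) u (s, \<theta>) = 0"
  shows "A * Du (s, \<theta>) (1, 0) + g1 s / speed s * D2 (1, 0) (1, 0)
      + speed s / g1 s * D2 (0, 1) (0, 1) = 0"
  using harmonic laplace_beltrami_rev_immersion[OF Du D2 s A] speed_pos[of s] pos[of s] s
  by simp

lemma harmonic_difference_equation:
  assumes u: "rev_end_harmonic g1 g2 u" and v: "rev_end_harmonic g1 g2 v"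
    and s: "s > 0" and A: "((\<lambda>t. g1 t / speed t) has_real_derivative A) (at s)"
  obtains Dw :: "real \<times> real \<Rightarrow> ((real \<times> real) \<Rightarrow>\<^sub>L real)" and D2
  where "\<And>q. fst q > 0 \<Longrightarrow> ((\<lambda>q. u q - v q) has_derivative blinfun_apply (Dw q)) (at q)"
    and "(Dw has_derivative blinfun_apply D2) (at (s, \<theta>))"
    and "A * Dw (s, \<theta>) (1, 0) + g1 s / speed s * D2 (1, 0) (1, 0)
      + speed s / g1 s * D2 (0, 1) (0, 1) = 0"
proof -
  obtain Du D2u where Du: "\<And>q. fst q > 0 \<Longrightarrow> (u has_derivative blinfun_apply (Du q)) (at q)"
    and D2u: "\<And>q. fst q > 0 \<Longrightarrow> (Du has_derivative blinfun_apply (D2u q)) (at q)"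
    and Lu: "\<And>q. fst q > 0 \<Longrightarrow> laplace_beltrami (hyp_g11 (rev_immersion g1 g2))
          (hyp_g12 (rev_immersion g1 g2)) (hyp_g22 (rev_immersion g1 g2)) u q = 0"
    using rev_end_harmonic_derivatives[OF u] by blast
  obtain Dv D2v where Dv: "\<And>q. fst q > 0 \<Longrightarrow> (v has_derivative blinfun_apply (Dv q)) (at q)"
    and D2v: "\<And>q. fst q > 0 \<Longrightarrow> (Dv has_derivative blinfun_apply (D2v q)) (at q)"
    and Lv: "\<And>q. fst q > 0 \<Longrightarrow> laplace_beltrami (hyp_g11 (rev_immersion g1 g2))
          (hyp_g12 (rev_immersion g1 g2)) (hyp_g22 (rev_immersion g1 g2)) v q = 0"
    using rev_end_harmonic_derivatives[OF v] by blast
  have Eu: "A * Du (s, \<theta>) (1, 0) + g1 s / speed s * D2u (s, \<theta>) (1, 0) (1, 0)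
      + speed s / g1 s * D2u (s, \<theta>) (0, 1) (0, 1) = 0"
    by (rule harmonic_radial_equation[OF Du D2u s A Lu]) (use s in simp_all)
  have Ev: "A * Dv (s, \<theta>) (1, 0) + g1 s / speed s * D2v (s, \<theta>) (1, 0) (1, 0)
      + speed s / g1 s * D2v (s, \<theta>) (0, 1) (0, 1) = 0"
    by (rule harmonic_radial_equation[OF Dv D2v s A Lv]) (use s in simp_all)
  define Dw where "Dw q = Du q - Dv q" for q
  define D2 where "D2 = D2u (s, \<theta>) - D2v (s, \<theta>)"
  have "((\<lambda>q. u q - v q) has_derivative blinfun_apply (Dw q)) (at q)" if "fst q > 0" for q
    using has_derivative_diff[OF Du[OF that] Dv[OF that]]
    by (simp add: Dw_def blinfun.diff_left[abs_def])
  moreover have "(Dw has_derivative blinfun_apply D2) (at (s, \<theta>))"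
    using has_derivative_diff[OF D2u D2v, of "(s, \<theta>)"] s
    by (simp add: Dw_def[abs_def] D2_def blinfun.diff_left[abs_def])
  moreover have "A * Dw (s, \<theta>) (1, 0) + g1 s / speed s * D2 (1, 0) (1, 0)
      + speed s / g1 s * D2 (0, 1) (0, 1) = 0"
    using Eu Ev by (simp add: Dw_def D2_def blinfun.diff_left algebra_simps)
  ultimately show ?thesis using that by blast
qed

lemma no_interior_max:
  assumes u: "rev_end_harmonic g1 g2 u" and v: "rev_end_harmonic g1 g2 v"
    and \<epsilon>: "\<epsilon> > 0" and s0: "s0 > 0"
    and max: "\<And>q. fst q > 0 \<Longrightarrow>
      u q - v q - \<epsilon> * barrier (fst q) \<le> u (s0, \<theta>0) - v (s0, \<theta>0) - \<epsilon> * barrier s0"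
  shows False
proof -
  obtain A where A: "((\<lambda>t. g1 t / speed t) has_real_derivative A) (at s0)"
    using flux_coeff_DERIV[OF s0] by blast
  obtain H where H: "(barrier_density has_real_derivative H) (at s0)"
    using barrier_density_DERIV[OF s0] by blast
  obtain Dw D2
    where Dw: "\<And>q. fst q > 0 \<Longrightarrow> ((\<lambda>q. u q - v q) has_derivative blinfun_apply (Dw q)) (at q)"
    and D2: "(Dw has_derivative blinfun_apply D2) (at (s0, \<theta>0))"
    and harmonic: "A * Dw (s0, \<theta>0) (1, 0) + g1 s0 / speed s0 * D2 (1, 0) (1, 0)
      + speed s0 / g1 s0 * D2 (0, 1) (0, 1) = 0"
    using harmonic_difference_equation[OF u v s0 A] by blast
  have radial: "Dw (s0, \<theta>0) (1, 0) = \<epsilon> * barrier_density s0 \<and> D2 (1, 0) (1, 0) \<le> \<epsilon> * H"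
    using local_max_fst_line[OF s0 Dw D2, of "\<lambda>t. \<epsilon> * barrier t" "\<lambda>t. \<epsilon> * barrier_density t"]
      barrier_DERIV DERIV_cmult[OF H, of \<epsilon>] max
    by (force intro: DERIV_cmult)
  have "D2 (0, 1) (0, 1) \<le> 0"
    using local_max_snd_line[OF s0 Dw D2] max[of "(s0, _)"] s0 by simp
  then have "speed s0 / g1 s0 * D2 (0, 1) (0, 1) \<le> 0"
    using speed_pos[of s0] pos[of s0] s0 by (intro mult_nonneg_nonpos) auto
  moreover have "g1 s0 / speed s0 * D2 (1, 0) (1, 0) \<le> g1 s0 / speed s0 * (\<epsilon> * H)"
    using radial speed_pos[of s0] pos[of s0] s0 by (intro mult_left_mono) auto
  ultimately have "0 \<le> \<epsilon> * (A * barrier_density s0 + g1 s0 / speed s0 * H)"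
    using harmonic radial by (simp add: algebra_simps)
  moreover have "\<epsilon> * (A * barrier_density s0 + g1 s0 / speed s0 * H) < 0"
    using barrier_superharmonic[OF s0 A H] \<epsilon> by (simp add: mult_pos_neg)
  ultimately show False by simp
qed

lemma bounded_harmonic_le:
  assumes barrier_top: "filterlim barrier at_top at_top"
    and u: "bounded_harmonic_on_rev_end g1 g2 u" and v: "bounded_harmonic_on_rev_end g1 g2 v"
    and boundary: "\<And>\<theta>. u (0, \<theta>) = v (0, \<theta>)"
    and p: "fst p \<ge> 0"
  shows "u p \<le> v p"
proof (rule ccontr)
  assume "\<not> u p \<le> v p"
  then have gap: "u p - v p > 0" by simp
  have cont: "continuous_on ({0..} \<times> UNIV) (\<lambda>q. u q - v q)"
    and per: "\<And>s \<theta>. s \<ge> 0 \<Longrightarrow>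
      u (s, \<theta> + 2 * pi) - v (s, \<theta> + 2 * pi) = u (s, \<theta>) - v (s, \<theta>)"
    using u v unfolding bounded_harmonic_on_rev_end_def by (auto intro: continuous_intros)
  obtain Bu where Bu: "\<And>q. fst q \<ge> 0 \<Longrightarrow> \<bar>u q\<bar> \<le> Bu"
    using bounded_harmonic_on_rev_end_bound[OF u] by blast
  obtain Bv where Bv: "\<And>q. fst q \<ge> 0 \<Longrightarrow> \<bar>v q\<bar> \<le> Bv"
    using bounded_harmonic_on_rev_end_bound[OF v] by blast
  define \<epsilon> where "\<epsilon> = (u p - v p) / (2 * (barrier (fst p) + 1))"
  define \<psi> where "\<psi> q = u q - v q - \<epsilon> * barrier (fst q)" for q
  have \<epsilon>: "\<epsilon> > 0" unfolding \<epsilon>_def using gap barrier_nonneg[OF p] by simp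
  have "\<epsilon> * barrier (fst p) = (u p - v p) / 2 * (barrier (fst p) / (barrier (fst p) + 1))"
    using barrier_nonneg[OF p] by (simp add: \<epsilon>_def field_simps)
  also have "\<dots> \<le> (u p - v p) / 2 * 1"
    using gap barrier_nonneg[OF p] by (intro mult_left_mono) auto
  finally have \<psi>p: "\<psi> p > 0" using gap unfolding \<psi>_def by simp
  obtain T0 where T0: "\<And>s. s \<ge> T0 \<Longrightarrow> barrier s \<ge> (Bu + Bv) / \<epsilon>"
    using barrier_top unfolding filterlim_at_top eventually_at_top_linorder by blast
  define T where "T = max T0 0"
  have tail: "\<psi> q < \<psi> p" if "fst q \<ge> T" for q
  proof -
    have "Bu + Bv \<le> \<epsilon> * barrier (fst q)"
      using T0[of "fst q"] that \<epsilon> by (simp add: T_def field_simps)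
    then have "\<psi> q \<le> 0" using Bu[of q] Bv[of q] that by (simp add: \<psi>_def T_def)
    with \<psi>p show ?thesis by simp
  qed
  have two_pi: "2 * pi > 0" by simp
  have "continuous_on ({0..T} \<times> {0..2 * pi}) \<psi>"
    unfolding \<psi>_def
    by (intro continuous_intros continuous_on_subset[OF cont]
        continuous_on_compose2[OF continuous_on_barrier continuous_on_fst]) auto
  moreover have "\<psi> (s, \<theta> + 2 * pi) = \<psi> (s, \<theta>)" if "s \<ge> 0" for s \<theta>
    using per[OF that] by (simp add: \<psi>_def)
  ultimately obtain p0 where p0: "fst p0 \<ge> 0" and max: "\<And>q. fst q \<ge> 0 \<Longrightarrow> \<psi> q \<le> \<psi> p0"
    using periodic_attains_max_on_half_plane[OF two_pi, of \<psi> T p] p tail by blast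
  have "fst p0 \<noteq> 0"
  proof
    assume "fst p0 = 0"
    then have "\<psi> p0 = 0" using boundary[of "snd p0"] by (cases p0) (simp add: \<psi>_def)
    then show False using max[OF p] \<psi>p by simp
  qed
  with p0 have "fst p0 > 0" by simp
  moreover have "\<psi> q \<le> \<psi> (fst p0, snd p0)" if "fst q > 0" for q
    using max[of q] that by simp
  ultimately show False
    using no_interior_max[OF _ _ \<epsilon>, of u v "fst p0" "snd p0"] u v
    unfolding bounded_harmonic_on_rev_end_def \<psi>_def by simp
qed

end

theorem theoremB:
  fixes g1 g2 :: "real \<Rightarrow> real" and c :: real
  assumes smooth1: "smooth_on {0..} g1"
      and smooth2: "smooth_on {0..} g2"
      and regular: "\<forall>s\<ge>0. profile_vel g1 g2 s \<noteq> 0"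
      and pos: "\<forall>s\<ge>0. g1 s > 0 \<and> g2 s > 0"
      and complete: "filterlim (hyp_length_upto g1 g2) at_top at_top"
      and c_pos: "c > 0"
      and on_cone: "rev_end g1 g2 \<subseteq> cone_region c"
  shows "parabolic_rev_end g1 g2"
proof -
  obtain d1 d2 where g1': "\<And>x. x \<ge> 0 \<Longrightarrow> (g1 has_real_derivative d1 x) (at x within {0..})"
    and d1': "\<And>x. x \<ge> 0 \<Longrightarrow> (d1 has_real_derivative d2 x) (at x within {0..})"
    using smooth_on_second_deriv[OF smooth1] by blast
  obtain e1 e2 where g2': "\<And>x. x \<ge> 0 \<Longrightarrow> (g2 has_real_derivative e1 x) (at x within {0..})"
    and e1': "\<And>x. x \<ge> 0 \<Longrightarrow> (e1 has_real_derivative e2 x) (at x within {0..})"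
    using smooth_on_second_deriv[OF smooth2] by blast
  have "(d1 s, e1 s) \<noteq> (0, 0)" if "s \<ge> 0" for s
    using regular[rule_format, OF that] profile_vel_eq[OF g1'[OF that] g2'[OF that] that]
    by (simp add: zero_prod_def)
  then interpret rotational_profile g1 g2 d1 d2 e1 e2
    using g1' d1' g2' e1' pos by unfold_locales auto
  have barrier_top: "filterlim barrier at_top at_top"
    using barrier_at_top[OF c_pos _ complete] rev_end_in_cone_region_imp[OF on_cone] pos by blast
  show ?thesis
    unfolding parabolic_rev_end_def
  proof (intro allI impI ballI)
    fix u v and p :: "real \<times> real"
    assume "bounded_harmonic_on_rev_end g1 g2 u \<and> bounded_harmonic_on_rev_end g1 g2 v
      \<and> (\<forall>\<theta>. u (0, \<theta>) = v (0, \<theta>))" and "p \<in> {0..} \<times> UNIV"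
    with bounded_harmonic_le[OF barrier_top]
    show "u p = v p" by (metis antisym mem_Times_iff atLeast_iff)
  qed
qed

end
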